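(* For a connected graph $G=(V,E)$ with $|V|=n$ and $1\le k\le n$, \[Z_{\mu^*_k}\le\binom{n-1}{k-1}T(G)\le n^{k-1}T(G),\] where $T(G)$ is the number of spanning trees of $G$.
   Context: $Z_{\mu^*_k}=\sum_{\{P_1,\dots,P_k\}}\prod_{i=1}^kT(P_i)$, the sum over partitions of $V$ into $k$ nonempty parts, where $T(P_i)$ is the number of spanning trees of the induced subgraph $G[P_i]$ (zero if $G[P_i]$ is disconnected); equivalently, the number of forests of $G$ with exactly $n-k$ edges. *)

theory Defs
  imports Main "HOL-Library.Disjoint_Sets"
begin

definition simple_graph :: "'a set \<Rightarrow> 'a set set \<Rightarrow> bool" where
  "simple_graph V E \<longleftrightarrow> finite V \<and> (\<forall>e\<in>E. e \<subseteq> V \<and> card e = 2)"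

definition adj :: "'a set set \<Rightarrow> 'a \<Rightarrow> 'a \<Rightarrow> bool" where
  "adj F u v \<longleftrightarrow> {u, v} \<in> F"

definition graph_connected :: "'a set \<Rightarrow> 'a set set \<Rightarrow> bool" where
  "graph_connected V F \<longleftrightarrow> V \<noteq> {} \<and>
     (\<forall>u\<in>V. \<forall>v\<in>V. (\<lambda>x y. x \<in> V \<and> y \<in> V \<and> adj F x y)\<^sup>*\<^sup>* u v)"

definition has_cycle :: "'a set set \<Rightarrow> bool" where
  "has_cycle F \<longleftrightarrow> (\<exists>vs. length vs \<ge> 3 \<and> distinct vs \<and>
     (\<forall>i < length vs - 1. adj F (vs ! i) (vs ! Suc i)) \<and> adj F (last vs) (hd vs))"

definition spanning_tree_of :: "'a set set \<Rightarrow> 'a set \<Rightarrow> 'a set set \<Rightarrow> bool" where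
  "spanning_tree_of E P F \<longleftrightarrow> F \<subseteq> {e \<in> E. e \<subseteq> P} \<and> graph_connected P F \<and> \<not> has_cycle F"

text \<open>T(G[P]): number of spanning trees of the induced subgraph G[P]
  (zero if G[P] is disconnected).\<close>
definition num_spanning_trees :: "'a set set \<Rightarrow> 'a set \<Rightarrow> nat" where
  "num_spanning_trees E P = card {F. spanning_tree_of E P F}"

definition Z_mu_star :: "'a set \<Rightarrow> 'a set set \<Rightarrow> nat \<Rightarrow> nat" where
  "Z_mu_star V E k = (\<Sum>\<P> \<in> {\<P>. partition_on V \<P> \<and> card \<P> = k}.
       \<Prod>P\<in>\<P>. num_spanning_trees E P)"

end

theory Submission
  imports Defs "HOL-Library.Transitive_Closure_Table" "HOL-Library.FuncSet"
begin

text \<open>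
  Choosing a k-partition of V and a spanning tree of each block, the union of the trees is a
  forest whose components are the blocks, so it determines the partition and the trees; it has
  n - k edges. Hence Z is at most the number of forests with n - k edges. Every forest extends to
  a spanning tree, which has n - 1 edges, so each such forest is an (n - k)-subset of one of the
  T(G) spanning trees, and there are at most C(n - 1, n - k) T(G) = C(n - 1, k - 1) T(G) of them.
\<close>

lemma finite_if_all_subset:
  assumes "finite A" "\<forall>X\<in>\<X>. X \<subseteq> A"
  shows "finite \<X>"
proof (rule finite_subset)
  show "\<X> \<subseteq> Pow A" "finite (Pow A)"
    using assms by auto
qed

text \<open>Unlike in graph_connected, walks are not confined to a vertex set.\<close>

definition reachable :: "'a set set \<Rightarrow> 'a \<Rightarrow> 'a \<Rightarrow> bool" where
  "reachable F = (adj F)\<^sup>*\<^sup>*"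

lemma adj_commute: "adj F x y \<longleftrightarrow> adj F y x"
  unfolding adj_def by (simp add: insert_commute)

lemma reachable_refl [simp]: "reachable F u u"
  unfolding reachable_def by simp

lemma reachable_edge: "{x, y} \<in> F \<Longrightarrow> reachable F x y"
  unfolding reachable_def adj_def by (rule r_into_rtranclp)

lemma reachable_trans: "reachable F u v \<Longrightarrow> reachable F v w \<Longrightarrow> reachable F u w"
  unfolding reachable_def by (rule rtranclp_trans)

lemma reachable_sym: "reachable F u v \<Longrightarrow> reachable F v u"
proof -
  have "symp (adj F)"
    by (rule sympI) (simp add: adj_commute)
  then show "reachable F u v \<Longrightarrow> reachable F v u"
    unfolding reachable_def by (metis symp_rtranclp sympD)
qed

lemma reachable_mono: "reachable F u v \<Longrightarrow> F \<subseteq> F' \<Longrightarrow> reachable F' u v"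
  unfolding reachable_def adj_def by (erule rtranclp_mono[THEN predicate2D, rotated]) auto

lemma reachable_induct [consumes 1, case_names refl step]:
  assumes "reachable F u v" and "P u"
    and "\<And>a b. reachable F u a \<Longrightarrow> {a, b} \<in> F \<Longrightarrow> P a \<Longrightarrow> P b"
  shows "P v"
  using assms(1) unfolding reachable_def
  by (induction rule: rtranclp_induct) (use assms(2,3) in \<open>auto simp: reachable_def adj_def\<close>)

lemma reachable_closed:
  assumes "reachable F u v" "u \<in> A" "\<And>a b. {a, b} \<in> F \<Longrightarrow> a \<in> A \<Longrightarrow> b \<in> A"
  shows "v \<in> A"
  using assms(1) by (induction rule: reachable_induct) (use assms(2,3) in auto)

lemma graph_connected_iff_reachable:
  assumes "\<forall>e\<in>F. e \<subseteq> V"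
  shows "graph_connected V F \<longleftrightarrow> V \<noteq> {} \<and> (\<forall>u\<in>V. \<forall>v\<in>V. reachable F u v)"
proof -
  have "(\<lambda>x y. x \<in> V \<and> y \<in> V \<and> adj F x y)\<^sup>*\<^sup>* u v" if "u \<in> V" "reachable F u v" for u v
    using that(2)
  proof (induction rule: reachable_induct)
    case (step a b)
    have "a \<in> V" "b \<in> V"
      using reachable_closed[OF step(1) \<open>u \<in> V\<close>] step(2) assms by auto
    with step show ?case by (simp add: rtranclp.rtrancl_into_rtrancl adj_def)
  qed simp
  moreover have "reachable F u v" if "(\<lambda>x y. x \<in> V \<and> y \<in> V \<and> adj F x y)\<^sup>*\<^sup>* u v" for u v
    using that unfolding reachable_def by (rule rtranclp_mono[THEN predicate2D, rotated]) auto
  ultimately show ?thesis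
    unfolding graph_connected_def by blast
qed

lemma reachable_insert_edge:
  assumes "reachable (insert {x, y} F) u v"
  shows "reachable F u v \<or> (reachable F u x \<and> reachable F y v) \<or> (reachable F u y \<and> reachable F x v)"
  using assms
proof (induction rule: reachable_induct)
  case (step a b)
  show ?case
  proof (cases "{a, b} \<in> F")
    case True
    then show ?thesis using step(3) reachable_edge reachable_trans by metis
  next
    case False
    then have "(a = x \<and> b = y) \<or> (a = y \<and> b = x)" using step(2) by (auto simp: doubleton_eq_iff)
    then show ?thesis using step(3) reachable_refl by metis
  qed
qed simp

lemma has_cycle_mono: "has_cycle F \<Longrightarrow> F \<subseteq> F' \<Longrightarrow> has_cycle F'"
  unfolding has_cycle_def adj_def by blast

lemma has_cycle_insert_if_reachable:
  assumes "reachable F x y" "x \<noteq> y" "{x, y} \<notin> F"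
  shows "has_cycle (insert {x, y} F)"
proof -
  obtain xs where path: "rtrancl_path (adj F) x xs y" and dist: "distinct (x # xs)"
    using assms(1) rtrancl_path_distinct unfolding reachable_def rtranclp_eq_rtrancl_path by metis
  have "xs \<noteq> []"
    using path assms(2) by (auto elim: rtrancl_path.cases)
  then have last: "last xs = y"
    using path by (rule rtrancl_path_last[rotated])
  have "xs \<noteq> [y]"
    using rtrancl_path_nth[OF path, of 0] assms(3) by (auto simp: adj_def)
  with \<open>xs \<noteq> []\<close> last have "3 \<le> length (x # xs)"
    by (cases xs rule: rev_cases) (auto simp: Suc_le_eq)
  moreover have "adj (insert {x, y} F) ((x # xs) ! i) ((x # xs) ! Suc i)" if "i < length (x # xs) - 1" for i
    using rtrancl_path_nth[OF path, of i] that by (auto simp: adj_def)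
  moreover have "adj (insert {x, y} F) (last (x # xs)) (hd (x # xs))"
    using last \<open>xs \<noteq> []\<close> by (simp add: adj_def insert_commute)
  ultimately show ?thesis
    unfolding has_cycle_def using dist by blast
qed

text \<open>Reading indices modulo the length makes the closing edge of a cycle an ordinary one.\<close>

lemma has_cycle_iff_mod:
  "has_cycle F \<longleftrightarrow>
     (\<exists>vs. 3 \<le> length vs \<and> distinct vs \<and> (\<forall>i<length vs. adj F (vs ! i) (vs ! (Suc i mod length vs))))"
proof -
  have "(\<forall>i<length vs - 1. adj F (vs ! i) (vs ! Suc i)) \<and> adj F (last vs) (hd vs) \<longleftrightarrow>
        (\<forall>i<length vs. adj F (vs ! i) (vs ! (Suc i mod length vs)))"
    if "3 \<le> length vs" for vs :: "'a list"
  proof -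
    define m where "m = length vs"
    have "vs \<noteq> []"
      using that by auto
    then have ends: "last vs = vs ! (m - 1)" "hd vs = vs ! 0"
      by (simp_all add: m_def last_conv_nth hd_conv_nth)
    have succ: "Suc i mod m = (if i = m - 1 then 0 else Suc i)" if "i < m" for i
      using that by (auto simp: mod_Suc)
    have "i < m \<longleftrightarrow> i < m - 1 \<or> i = m - 1" for i
      using that unfolding m_def by linarith
    then show ?thesis
      using that unfolding ends m_def[symmetric] by (auto simp: succ)
  qed
  then show ?thesis
    unfolding has_cycle_def by blast
qed

lemma cycle_edge_inj:
  assumes "distinct vs" "3 \<le> length vs" "i < length vs" "j < length vs"
    and "{vs ! i, vs ! (Suc i mod length vs)} = {vs ! j, vs ! (Suc j mod length vs)}"
  shows "i = j"
proof (rule ccontr)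
  assume "i \<noteq> j"
  define m where "m = length vs"
  have "vs ! i \<noteq> vs ! j"
    using assms(1,3,4) \<open>i \<noteq> j\<close> by (simp add: nth_eq_iff_index_eq)
  then have "vs ! i = vs ! (Suc j mod m)" "vs ! j = vs ! (Suc i mod m)"
    using assms(5) unfolding m_def by (auto simp: doubleton_eq_iff)
  moreover have "0 < m"
    using assms(3) unfolding m_def by linarith
  then have "Suc i mod m < m" "Suc j mod m < m"
    by simp_all
  ultimately have "i = Suc j mod m" "j = Suc i mod m"
    using assms(1,3,4) unfolding m_def by (metis nth_eq_iff_index_eq)+
  then have "Suc (Suc i) mod m = i"
    by (simp add: mod_Suc_eq)
  then show False
    using assms(2,3) unfolding m_def[symmetric] by (cases "Suc (Suc i) < m") (auto simp: le_mod_geq)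
qed

lemma reachable_around_cycle:
  assumes "i < length vs" and "\<forall>j<length vs. j \<noteq> i \<longrightarrow> adj F (vs ! j) (vs ! (Suc j mod length vs))"
  shows "reachable F (vs ! (Suc i mod length vs)) (vs ! i)"
proof -
  define m where "m = length vs"
  have along: "reachable F (vs ! (Suc i mod m)) (vs ! ((Suc i + d) mod m))" if "d < m" for d
    using that
  proof (induction d)
    case (Suc d)
    define j where "j = (Suc i + d) mod m"
    have "j < m" "j \<noteq> i"
      using Suc.prems assms(1) unfolding j_def m_def by (auto simp: mod_if)
    then have "adj F (vs ! j) (vs ! (Suc j mod m))"
      using assms(2) unfolding m_def by blast
    moreover have "Suc j mod m = (Suc i + Suc d) mod m"
      unfolding j_def by (simp add: mod_Suc_eq)
    ultimately show ?case
      using Suc unfolding j_def by (auto simp: adj_def intro: reachable_trans reachable_edge)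
  qed simp
  have "m - 1 < m" "Suc i + (m - 1) = i + m"
    using assms(1) unfolding m_def by linarith+
  then show ?thesis
    using along[of "m - 1"] assms(1) unfolding m_def by simp
qed

lemma reachable_if_has_cycle_insert:
  assumes "\<not> has_cycle T" and "has_cycle (insert {x, y} T)"
  shows "reachable T x y"
proof -
  obtain vs where len: "3 \<le> length vs" and dist: "distinct vs"
    and cyc: "\<forall>i<length vs. adj (insert {x, y} T) (vs ! i) (vs ! (Suc i mod length vs))"
    using assms(2) unfolding has_cycle_iff_mod by blast
  define e where "e i = {vs ! i, vs ! (Suc i mod length vs)}" for i
  obtain i where i: "i < length vs" "e i \<notin> T"
    using assms(1) len dist unfolding has_cycle_iff_mod adj_def e_def by blast
  then have xy: "e i = {x, y}"
    using cyc unfolding adj_def e_def by auto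
  have "e j \<in> T" if "j < length vs" "j \<noteq> i" for j
    using cyc cycle_edge_inj[OF dist len i(1) that(1)] that xy unfolding e_def adj_def by auto
  then have "reachable T (vs ! (Suc i mod length vs)) (vs ! i)"
    using i(1) by (intro reachable_around_cycle) (auto simp: adj_def e_def)
  then show ?thesis
    using xy unfolding e_def by (auto simp: doubleton_eq_iff intro: reachable_sym)
qed

definition component :: "'a set set \<Rightarrow> 'a \<Rightarrow> 'a set" where
  "component F u = {v. reachable F u v}"

definition components :: "'a set \<Rightarrow> 'a set set \<Rightarrow> 'a set set" where
  "components V F = component F ` V"

lemma in_component_self [simp]: "u \<in> component F u"
  unfolding component_def by simp

lemma component_eq: "v \<in> component F u \<Longrightarrow> component F v = component F u"
  unfolding component_def by (auto intro: reachable_trans reachable_sym)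

lemma components_empty: "components V {} = (\<lambda>u. {u}) ` V"
proof -
  have "reachable {} u v \<Longrightarrow> v = u" for u v :: 'a
    by (induction rule: reachable_induct) auto
  then have "component {} u = {u}" for u :: 'a
    unfolding component_def by auto
  then show ?thesis
    unfolding components_def by simp
qed

lemma component_insert_edge:
  "component (insert {x, y} F) u =
     (if u \<in> component F x \<union> component F y then component F x \<union> component F y else component F u)"
proof -
  have reach_iff: "reachable (insert {x, y} F) u v \<longleftrightarrow>
      reachable F u v \<or> (reachable F u x \<and> reachable F y v) \<or> (reachable F u y \<and> reachable F x v)" for v
  proof
    have "reachable (insert {x, y} F) x y" "reachable (insert {x, y} F) y x"
      by (auto intro: reachable_edge simp: insert_commute)
    moreover have "reachable (insert {x, y} F) a b" if "reachable F a b" for a b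
      using that by (rule reachable_mono) auto
    ultimately show "reachable (insert {x, y} F) u v"
      if "reachable F u v \<or> (reachable F u x \<and> reachable F y v) \<or> (reachable F u y \<and> reachable F x v)"
      using that by (meson reachable_trans)
  qed (rule reachable_insert_edge)
  show ?thesis
  proof (cases "u \<in> component F x \<union> component F y")
    case True
    then have "reachable F u x \<or> reachable F u y"
      unfolding component_def by (blast intro: reachable_sym)
    then have "reachable (insert {x, y} F) u v \<longleftrightarrow> reachable F x v \<or> reachable F y v" for v
      unfolding reach_iff by (metis reachable_sym reachable_trans)
    with True show ?thesis
      unfolding component_def by auto
  next
    case False
    then have "\<not> reachable F u x" "\<not> reachable F u y"
      unfolding component_def by (blast intro: reachable_sym)+
    with False show ?thesis
      unfolding component_def reach_iff by auto
  qed
qed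

lemma components_insert_edge:
  assumes "x \<in> V"
  shows "components V (insert {x, y} F) =
    insert (component F x \<union> component F y) (components V F - {component F x, component F y})"
proof -
  define C where "C = component F"
  have untouched: "C u \<notin> {C x, C y} \<longleftrightarrow> u \<notin> C x \<union> C y" for u
    using component_eq[of u F x] component_eq[of u F y] in_component_self[of u F] unfolding C_def by auto
  have "components V (insert {x, y} F) = (\<lambda>u. if u \<in> C x \<union> C y then C x \<union> C y else C u) ` V"
    unfolding components_def component_insert_edge C_def ..
  also have "\<dots> = insert (C x \<union> C y) (components V F - {C x, C y})"
  proof (intro equalityI subsetI)
    fix S assume "S \<in> (\<lambda>u. if u \<in> C x \<union> C y then C x \<union> C y else C u) ` V"
    then obtain u where "u \<in> V" "S = (if u \<in> C x \<union> C y then C x \<union> C y else C u)"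
      by blast
    then show "S \<in> insert (C x \<union> C y) (components V F - {C x, C y})"
      using untouched[of u] unfolding components_def C_def by auto
  next
    fix S assume "S \<in> insert (C x \<union> C y) (components V F - {C x, C y})"
    then consider "S = C x \<union> C y" | u where "u \<in> V" "S = C u" "C u \<notin> {C x, C y}"
      unfolding components_def C_def by blast
    then show "S \<in> (\<lambda>u. if u \<in> C x \<union> C y then C x \<union> C y else C u) ` V"
    proof cases
      case 1
      have "x \<in> C x"
        unfolding C_def by simp
      with 1 assms show ?thesis
        by (intro image_eqI[of _ _ x]) auto
    next
      case 2
      then show ?thesis
        using untouched[of u] by (intro image_eqI[of _ _ u]) auto
    qed
  qed
  finally show ?thesis
    unfolding C_def .
qed

lemma card_components_insert_edge:
  assumes "finite V" "x \<in> V" "y \<in> V" "\<not> reachable F x y"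
  shows "card (components V (insert {x, y} F)) + 1 = card (components V F)"
proof -
  define C where "C = component F"
  have "C x \<noteq> C y"
    using assms(4) in_component_self[of y F] unfolding C_def component_def by blast
  have "C x \<union> C y \<notin> components V F"
  proof
    assume "C x \<union> C y \<in> components V F"
    then obtain u where "C x \<union> C y = C u"
      unfolding components_def C_def by blast
    moreover have "x \<in> C x \<union> C y" "y \<in> C x \<union> C y"
      unfolding C_def by simp_all
    ultimately have "x \<in> C u" "y \<in> C u"
      by simp_all
    then have "C x = C u" "C y = C u"
      unfolding C_def by (simp_all add: component_eq)
    with \<open>C x \<noteq> C y\<close> show False by simp
  qed
  moreover have "{C x, C y} \<subseteq> components V F" "finite (components V F)"
    using assms(1-3) unfolding components_def C_def by auto
  moreover from this have "card {C x, C y} \<le> card (components V F)"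
    by (simp add: card_mono)
  ultimately show ?thesis
    unfolding components_insert_edge[OF assms(2)] C_def[symmetric]
    using \<open>C x \<noteq> C y\<close> by (simp add: card_Diff_subset)
qed

text \<open>Adding an edge to an acyclic set merges two components: an edge inside one would close a cycle.\<close>

lemma card_acyclic_add_components:
  assumes "finite V" "finite F" "\<forall>e\<in>F. e \<subseteq> V \<and> card e = 2" "\<not> has_cycle F"
  shows "card F + card (components V F) = card V"
  using assms(2-4)
proof (induction F rule: finite_induct)
  case empty
  then show ?case
    by (simp add: components_empty card_image)
next
  case (insert e F)
  obtain x y where e: "e = {x, y}" "x \<noteq> y"
    using insert.prems(1) by (auto simp: card_2_iff)
  have "\<not> has_cycle F"
    using insert.prems(2) has_cycle_mono by blast
  then have "card F + card (components V F) = card V"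
    using insert.IH insert.prems(1) by blast
  moreover have "\<not> reachable F x y"
    using has_cycle_insert_if_reachable[of F x y] insert.hyps(2) insert.prems(2) e by auto
  then have "card (components V (insert e F)) + 1 = card (components V F)"
    unfolding e(1) using assms(1) insert.prems(1) e by (intro card_components_insert_edge) auto
  ultimately show ?case
    using insert.hyps by simp
qed

lemma card_spanning_tree:
  assumes "simple_graph V E" "spanning_tree_of E V T"
  shows "card T + 1 = card V"
proof -
  have "finite V" and within: "\<forall>e\<in>T. e \<subseteq> V" and pairs: "\<forall>e\<in>T. card e = 2"
    using assms unfolding simple_graph_def spanning_tree_of_def by auto
  have "finite T"
    using \<open>finite V\<close> within by (rule finite_if_all_subset)
  have "graph_connected V T"
    using assms(2) unfolding spanning_tree_of_def by blast
  then have "V \<noteq> {}" and connected: "\<forall>u\<in>V. \<forall>v\<in>V. reachable T u v"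
    unfolding graph_connected_iff_reachable[OF within] by blast+
  have "component T u = V" if "u \<in> V" for u
  proof (intro equalityI subsetI)
    fix v assume "v \<in> component T u"
    then have "reachable T u v"
      unfolding component_def by simp
    then show "v \<in> V"
      using that by (rule reachable_closed) (use within in blast)
  next
    fix v assume "v \<in> V"
    then show "v \<in> component T u"
      using connected that unfolding component_def by simp
  qed
  then have "components V T = {V}"
    using \<open>V \<noteq> {}\<close> unfolding components_def by (simp add: image_constant_conv cong: image_cong)
  then show ?thesis
    using card_acyclic_add_components[OF \<open>finite V\<close> \<open>finite T\<close>] within pairs assms(2)
    unfolding spanning_tree_of_def by simp
qed

lemma simple_graph_finite_edges: "simple_graph V E \<Longrightarrow> finite E"
  unfolding simple_graph_def using finite_if_all_subset by blast

text \<open>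
  Take T maximal among the acyclic sets between F and E: an edge of E outside T closes a cycle,
  so its endpoints are already joined in T.
\<close>

lemma extend_to_spanning_tree:
  assumes "simple_graph V E" "graph_connected V E" "F \<subseteq> E" "\<not> has_cycle F"
  obtains T where "spanning_tree_of E V T" "F \<subseteq> T"
proof -
  have E_within: "\<forall>e\<in>E. e \<subseteq> V" and "finite E"
    using assms(1) simple_graph_finite_edges unfolding simple_graph_def by auto
  define S where "S = {T. F \<subseteq> T \<and> T \<subseteq> E \<and> \<not> has_cycle T}"
  have "finite S" "F \<in> S"
    using \<open>finite E\<close> assms(3,4) unfolding S_def by auto
  then obtain T where "T \<in> S" and maximal: "\<And>T'. T' \<in> S \<Longrightarrow> T \<subseteq> T' \<Longrightarrow> T = T'"
    using finite_has_maximal[of S] by blast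
  then have T: "F \<subseteq> T" "T \<subseteq> E" "\<not> has_cycle T"
    unfolding S_def by auto
  have edge: "reachable T a b" if "{a, b} \<in> E" for a b
  proof (cases "{a, b} \<in> T")
    case True
    then show ?thesis by (rule reachable_edge)
  next
    case False
    then have "insert {a, b} T \<notin> S"
      using maximal[of "insert {a, b} T"] by blast
    then have "has_cycle (insert {a, b} T)"
      using T that unfolding S_def by blast
    with T(3) show ?thesis
      by (rule reachable_if_has_cycle_insert)
  qed
  have "reachable T u v" if "reachable E u v" for u v
    using that by (induction rule: reachable_induct) (auto intro: reachable_trans edge)
  moreover have T_within: "\<forall>e\<in>T. e \<subseteq> V"
    using T(2) E_within by blast
  ultimately have "graph_connected V T"
    using assms(2)
    unfolding graph_connected_iff_reachable[OF E_within] graph_connected_iff_reachable[OF T_within]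
    by blast
  then have "spanning_tree_of E V T"
    unfolding spanning_tree_of_def using T E_within by blast
  then show ?thesis
    using T(1) by (rule that)
qed

lemma has_cycle_in_component:
  assumes "has_cycle F"
  obtains u where "u \<in> \<Union>F" "has_cycle {e \<in> F. e \<subseteq> component F u}"
proof -
  obtain vs where len: "3 \<le> length vs" and dist: "distinct vs"
    and cyc: "\<forall>i<length vs. adj F (vs ! i) (vs ! (Suc i mod length vs))"
    using assms unfolding has_cycle_iff_mod by blast
  define u where "u = vs ! 0"
  have in_comp: "vs ! i \<in> component F u" if "i < length vs" for i
    using that
  proof (induction i)
    case (Suc i)
    then have "{vs ! i, vs ! Suc i} \<in> F"
      using cyc[rule_format, of i] by (simp add: adj_def)
    with Suc show ?case
      unfolding component_def by (auto intro: reachable_trans reachable_edge)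
  qed (simp add: u_def)
  have "adj {e \<in> F. e \<subseteq> component F u} (vs ! i) (vs ! (Suc i mod length vs))" if "i < length vs" for i
  proof -
    have "Suc i mod length vs < length vs"
      using that by (intro mod_less_divisor) linarith
    then show ?thesis
      using cyc that in_comp by (simp add: adj_def)
  qed
  then have "has_cycle {e \<in> F. e \<subseteq> component F u}"
    unfolding has_cycle_iff_mod using len dist by blast
  moreover have "u \<in> \<Union>F"
  proof -
    have "vs \<noteq> []"
      using len by auto
    then show ?thesis
      using cyc[rule_format, of 0] unfolding adj_def u_def by auto
  qed
  ultimately show ?thesis
    by (rule that[rotated])
qed

locale spanning_forest =
  fixes V :: "'a set" and E :: "'a set set" and \<P> :: "'a set set" and f :: "'a set \<Rightarrow> 'a set set"
  assumes simple: "simple_graph V E"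
    and partition: "partition_on V \<P>"
    and spanning: "\<And>P. P \<in> \<P> \<Longrightarrow> spanning_tree_of E P (f P)"
begin

definition forest :: "'a set set" where
  "forest = \<Union>(f ` \<P>)"

lemma forest_subset: "forest \<subseteq> E"
  using spanning unfolding forest_def spanning_tree_of_def by blast

lemma tree_subset: "P \<in> \<P> \<Longrightarrow> f P \<subseteq> {e \<in> E. e \<subseteq> P}"
  using spanning unfolding spanning_tree_of_def by blast

lemma forest_edge_in_tree:
  assumes "e \<in> forest" "P \<in> \<P>" "x \<in> e" "x \<in> P"
  shows "e \<in> f P"
proof -
  obtain Q where "Q \<in> \<P>" "e \<in> f Q"
    using assms(1) unfolding forest_def by blast
  moreover from this have "x \<in> Q"
    using tree_subset assms(3) by blast
  then have "Q = P"
    using partition_onD2[OF partition] \<open>Q \<in> \<P>\<close> assms(2,4) unfolding disjoint_def by blast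
  ultimately show ?thesis by simp
qed

lemma tree_eq: "P \<in> \<P> \<Longrightarrow> f P = {e \<in> forest. e \<subseteq> P}"
proof (intro equalityI subsetI)
  fix e assume "P \<in> \<P>" "e \<in> {e \<in> forest. e \<subseteq> P}"
  moreover have "card e = 2"
    using \<open>e \<in> {e \<in> forest. e \<subseteq> P}\<close> forest_subset simple unfolding simple_graph_def by auto
  then obtain x where "x \<in> e"
    by (auto simp: card_2_iff)
  ultimately show "e \<in> f P"
    using forest_edge_in_tree by blast
qed (use tree_subset in \<open>auto simp: forest_def\<close>)

lemma component_forest:
  assumes "P \<in> \<P>" "u \<in> P"
  shows "component forest u = P"
proof (intro equalityI subsetI)
  fix v assume "v \<in> component forest u"
  then have "reachable forest u v"
    unfolding component_def by simp
  then show "v \<in> P"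
    using assms(2)
  proof (rule reachable_closed)
    fix a b assume "{a, b} \<in> forest" "a \<in> P"
    then show "b \<in> P"
      using forest_edge_in_tree[of "{a, b}" P a] tree_subset assms(1) by blast
  qed
next
  fix v assume "v \<in> P"
  have "\<forall>e\<in>f P. e \<subseteq> P" "graph_connected P (f P)"
    using tree_subset spanning assms(1) unfolding spanning_tree_of_def by blast+
  then have "reachable (f P) u v"
    using assms(2) \<open>v \<in> P\<close> graph_connected_iff_reachable by blast
  then show "v \<in> component forest u"
    using assms(1) unfolding component_def forest_def by (auto elim: reachable_mono)
qed

lemma components_forest: "components V forest = \<P>"
proof -
  have "\<exists>P\<in>\<P>. component forest u = P" if "u \<in> V" for u
    using that partition_onD1[OF partition] component_forest by blast
  moreover have "\<exists>u\<in>V. component forest u = P" if "P \<in> \<P>" for P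
    using that partition_onD1[OF partition] partition_onD3[OF partition] component_forest
    by (metis UnionI all_not_in_conv)
  ultimately show ?thesis
    unfolding components_def by blast
qed

lemma forest_acyclic: "\<not> has_cycle forest"
proof
  assume "has_cycle forest"
  then obtain u where "u \<in> \<Union>forest" "has_cycle {e \<in> forest. e \<subseteq> component forest u}"
    by (rule has_cycle_in_component)
  moreover have "\<Union>forest \<subseteq> V"
    using forest_subset simple unfolding simple_graph_def by blast
  ultimately obtain P where "P \<in> \<P>" "u \<in> P" "has_cycle {e \<in> forest. e \<subseteq> P}"
    using partition_onD1[OF partition] component_forest by blast
  then show False
    using spanning tree_eq unfolding spanning_tree_of_def by metis
qed

lemma card_forest_partition: "card forest + card \<P> = card V"
proof -
  have "finite V" "\<forall>e\<in>forest. e \<subseteq> V \<and> card e = 2"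
    using simple forest_subset unfolding simple_graph_def by auto
  moreover from this have "finite forest"
    using finite_if_all_subset[of V forest] by blast
  ultimately show ?thesis
    using card_acyclic_add_components forest_acyclic components_forest by metis
qed

end

definition forests :: "'a set set \<Rightarrow> nat \<Rightarrow> 'a set set set" where
  "forests E m = {F. F \<subseteq> E \<and> \<not> has_cycle F \<and> card F = m}"

lemma card_forests_le:
  assumes "simple_graph V E" "graph_connected V E"
  shows "card (forests E m) \<le> ((card V - 1) choose m) * num_spanning_trees E V"
proof -
  define trees where "trees = {T. spanning_tree_of E V T}"
  have trees_subset: "T \<subseteq> E" if "T \<in> trees" for T
    using that unfolding trees_def spanning_tree_of_def by blast
  have "finite E"
    using assms(1) by (rule simple_graph_finite_edges)
  then have "finite trees"
    using trees_subset finite_if_all_subset[of E trees] by blast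
  define subforests where "subforests = (\<Union>T\<in>trees. {S. S \<subseteq> T \<and> card S = m})"
  have "forests E m \<subseteq> subforests"
  proof
    fix F assume "F \<in> forests E m"
    then have "F \<subseteq> E" "\<not> has_cycle F" "card F = m"
      unfolding forests_def by auto
    moreover obtain T where "spanning_tree_of E V T" "F \<subseteq> T"
      using extend_to_spanning_tree[OF assms \<open>F \<subseteq> E\<close> \<open>\<not> has_cycle F\<close>] .
    ultimately show "F \<in> subforests"
      unfolding subforests_def trees_def by blast
  qed
  moreover have "finite subforests"
    using \<open>finite E\<close> trees_subset finite_if_all_subset[of E subforests]
    unfolding subforests_def by blast
  ultimately have "card (forests E m) \<le> card subforests"
    by (rule card_mono[rotated])
  also have "\<dots> \<le> (\<Sum>T\<in>trees. card {S. S \<subseteq> T \<and> card S = m})"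
    unfolding subforests_def using \<open>finite trees\<close> by (rule card_UN_le)
  also have "\<dots> = (\<Sum>T\<in>trees. (card V - 1) choose m)"
  proof (rule sum.cong)
    fix T assume "T \<in> trees"
    then have "finite T" "card T = card V - 1"
      using finite_subset[OF trees_subset \<open>finite E\<close>] card_spanning_tree[OF assms(1), of T]
      unfolding trees_def by auto
    then show "card {S. S \<subseteq> T \<and> card S = m} = (card V - 1) choose m"
      by (simp add: n_subsets)
  qed simp
  finally show ?thesis
    unfolding num_spanning_trees_def trees_def by (simp add: mult.commute)
qed

definition tree_partitions ::
    "'a set \<Rightarrow> 'a set set \<Rightarrow> nat \<Rightarrow> ('a set set \<times> ('a set \<Rightarrow> 'a set set)) set" where
  "tree_partitions V E k =
     (SIGMA \<P>:{\<P>. partition_on V \<P> \<and> card \<P> = k}. \<Pi>\<^sub>E P\<in>\<P>. {T. spanning_tree_of E P T})"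

lemma Z_mu_star_eq_card_tree_partitions:
  assumes "finite V"
  shows "Z_mu_star V E k = card (tree_partitions V E k)"
proof -
  define parts where "parts = {\<P>. partition_on V \<P> \<and> card \<P> = k}"
  have finite_parts: "finite parts"
    using finitely_many_partition_on[OF assms] unfolding parts_def by (rule finite_subset[rotated]) blast
  have finite_blocks: "finite \<P>" if "\<P> \<in> parts" for \<P>
    using that finite_elements[OF assms] unfolding parts_def by blast
  have finite_trees: "finite {T. spanning_tree_of E P T}" if "\<P> \<in> parts" "P \<in> \<P>" for \<P> P
  proof (rule finite_if_all_subset)
    have "P \<subseteq> V"
      using that partition_onD1 unfolding parts_def by blast
    then show "finite (Pow P)"
      using assms finite_subset by blast
    show "\<forall>T\<in>{T. spanning_tree_of E P T}. T \<subseteq> Pow P"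
      unfolding spanning_tree_of_def by auto
  qed
  have "Z_mu_star V E k = (\<Sum>\<P>\<in>parts. card (\<Pi>\<^sub>E P\<in>\<P>. {T. spanning_tree_of E P T}))"
    unfolding Z_mu_star_def num_spanning_trees_def parts_def[symmetric]
    using finite_blocks by (simp add: card_PiE)
  also have "\<dots> = card (tree_partitions V E k)"
    unfolding tree_partitions_def parts_def[symmetric]
    using finite_parts finite_blocks finite_trees by (subst card_SigmaI) (auto intro: finite_PiE)
  finally show ?thesis .
qed

lemma spanning_forest_if_tree_partition:
  assumes "simple_graph V E" "(\<P>, f) \<in> tree_partitions V E k"
  shows "spanning_forest V E \<P> f"
  using assms unfolding spanning_forest_def tree_partitions_def by auto

lemma inj_on_forest_tree_partitions:
  assumes "simple_graph V E"
  shows "inj_on (\<lambda>(\<P>, f). \<Union>(f ` \<P>)) (tree_partitions V E k)"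
proof (rule inj_onI, clarify)
  fix \<P> f \<Q> g
  assume in_\<P>: "(\<P>, f) \<in> tree_partitions V E k" and in_\<Q>: "(\<Q>, g) \<in> tree_partitions V E k"
    and same: "\<Union>(f ` \<P>) = \<Union>(g ` \<Q>)"
  interpret \<P>: spanning_forest V E \<P> f
    using assms in_\<P> by (rule spanning_forest_if_tree_partition)
  interpret \<Q>: spanning_forest V E \<Q> g
    using assms in_\<Q> by (rule spanning_forest_if_tree_partition)
  have forests_eq: "\<P>.forest = \<Q>.forest"
    using same unfolding \<P>.forest_def \<Q>.forest_def .
  then have "\<P> = \<Q>"
    using \<P>.components_forest \<Q>.components_forest by simp
  moreover have "f P = g P" if "P \<in> \<P>" for P
    using that \<P>.tree_eq \<Q>.tree_eq forests_eq \<open>\<P> = \<Q>\<close> by simp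
  then have "f = g"
    using in_\<P> in_\<Q> \<open>\<P> = \<Q>\<close> unfolding tree_partitions_def by (auto intro: PiE_ext)
  ultimately show "\<P> = \<Q> \<and> f = g" ..
qed

lemma Z_mu_star_le_card_forests:
  assumes "simple_graph V E"
  shows "Z_mu_star V E k \<le> card (forests E (card V - k))"
proof -
  have "(\<lambda>(\<P>, f). \<Union>(f ` \<P>)) ` tree_partitions V E k \<subseteq> forests E (card V - k)"
  proof clarify
    fix \<P> f assume in_\<P>: "(\<P>, f) \<in> tree_partitions V E k"
    interpret spanning_forest V E \<P> f
      using assms in_\<P> by (rule spanning_forest_if_tree_partition)
    have "card \<P> = k"
      using in_\<P> unfolding tree_partitions_def by simp
    moreover have "card forest = card V - card \<P>"
      using card_forest_partition by simp
    ultimately show "\<Union>(f ` \<P>) \<in> forests E (card V - k)"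
      using forest_subset forest_acyclic unfolding forests_def forest_def[symmetric] by simp
  qed
  moreover have "finite (forests E (card V - k))"
    using simple_graph_finite_edges[OF assms] finite_if_all_subset[of E "forests E (card V - k)"]
    unfolding forests_def by blast
  ultimately have "card (tree_partitions V E k) \<le> card (forests E (card V - k))"
    using inj_on_forest_tree_partitions[OF assms] by (intro card_inj_on_le)
  moreover have "finite V"
    using assms unfolding simple_graph_def by blast
  ultimately show ?thesis
    by (simp add: Z_mu_star_eq_card_tree_partitions)
qed

theorem lemma5p1:
  fixes V :: "'a set" and E :: "'a set set" and n k :: nat
  assumes "simple_graph V E" and "graph_connected V E"
    and "card V = n" and "1 \<le> k" and "k \<le> n"
  shows "Z_mu_star V E k \<le> ((n - 1) choose (k - 1)) * num_spanning_trees E V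
       \<and> ((n - 1) choose (k - 1)) * num_spanning_trees E V \<le> n ^ (k - 1) * num_spanning_trees E V"
proof
  have "Z_mu_star V E k \<le> card (forests E (n - k))"
    using Z_mu_star_le_card_forests[OF assms(1)] assms(3) by simp
  also have "\<dots> \<le> ((n - 1) choose (n - k)) * num_spanning_trees E V"
    using card_forests_le[OF assms(1,2)] assms(3) by simp
  also have "(n - 1) choose (n - k) = (n - 1) choose (k - 1)"
    using assms(4,5) binomial_symmetric[of "k - 1" "n - 1"] by simp
  finally show "Z_mu_star V E k \<le> ((n - 1) choose (k - 1)) * num_spanning_trees E V" .
next
  have "(n - 1) choose (k - 1) \<le> (n - 1) ^ (k - 1)"
    using assms(4,5) by (intro binomial_le_pow) simp
  also have "\<dots> \<le> n ^ (k - 1)"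
    by (intro power_mono) simp_all
  finally show "((n - 1) choose (k - 1)) * num_spanning_trees E V \<le> n ^ (k - 1) * num_spanning_trees E V"
    by (rule mult_right_mono) simp
qed

end
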